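(* Let $G$ be a finite simple graph on $n$ vertices with minimum degree $\delta(G)\geq 1$. Then $f_o(G)\geq \frac{n}{10000}$; that is, there is a set $V_0\subseteq V(G)$ with $|V_0|\geq n/10000$ such that every vertex of the induced subgraph $G[V_0]$ has odd degree in $G[V_0]$.
   Context: For a graph $G$, $f_o(G)$ denotes the maximum of $|V_0|$ over all $V_0\subseteq V(G)$ such that the induced subgraph $G[V_0]$ has all degrees odd. *)

theory Defs
  imports Main
begin

definition simple_graph :: "'a set \<Rightarrow> ('a \<Rightarrow> 'a \<Rightarrow> bool) \<Rightarrow> bool" where
  "simple_graph V E \<longleftrightarrow> finite V \<and> (\<forall>u v. E u v \<longrightarrow> u \<in> V \<and> v \<in> V)
     \<and> (\<forall>u v. E u v \<longrightarrow> E v u) \<and> (\<forall>v. \<not> E v v)"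

definition induced_degree :: "('a \<Rightarrow> 'a \<Rightarrow> bool) \<Rightarrow> 'a set \<Rightarrow> 'a \<Rightarrow> nat" where
  "induced_degree E S v = card {u \<in> S. E v u}"

definition degree :: "'a set \<Rightarrow> ('a \<Rightarrow> 'a \<Rightarrow> bool) \<Rightarrow> 'a \<Rightarrow> nat" where
  "degree V E v = induced_degree E V v"

definition all_odd_induced :: "'a set \<Rightarrow> ('a \<Rightarrow> 'a \<Rightarrow> bool) \<Rightarrow> 'a set \<Rightarrow> bool" where
  "all_odd_induced V E S \<longleftrightarrow> S \<subseteq> V \<and> (\<forall>v\<in>S. odd (induced_degree E S v))"

definition f_o :: "'a set \<Rightarrow> ('a \<Rightarrow> 'a \<Rightarrow> bool) \<Rightarrow> nat" where
  "f_o V E = Max (card ` {S. all_odd_induced V E S})"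

end

theory Submission
  imports Defs
begin

text \<open>Take a maximal independent set I and a uniformly random C \<subseteq> I, and let U be the set of
  vertices outside C with an odd number of neighbours in C. For a random U' \<subseteq> U, Gallai's
  theorem splits U' into two parts that induce only even degrees in the graph whose adjacency is
  twisted by the parity of the number of common neighbours in C. Each part S, together with the
  vertices of C having an odd number of neighbours in S, induces a subgraph with all degrees odd.
  Averaging twice, over U' and over C, gives card V \<le> 16 f_o(G).\<close>

lemma odd_card_Collect_neq_iff:
  assumes "finite A"
  shows "odd (card {x\<in>A. P x \<noteq> Q x}) \<longleftrightarrow> odd (card {x\<in>A. P x}) \<noteq> odd (card {x\<in>A. Q x})"
  using assms
proof (induction rule: finite_induct)
  case (insert a A)
  have "{x\<in>insert a A. R x} = (if R a then insert a {x\<in>A. R x} else {x\<in>A. R x})" for R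
    by auto
  with insert show ?case
    by (cases "P a"; cases "Q a") simp_all
qed simp

lemma sum_card_Collect_swap:
  assumes "finite A" "finite B"
  shows "(\<Sum>a\<in>A. card {b\<in>B. P a b}) = (\<Sum>b\<in>B. card {a\<in>A. P a b})"
proof -
  have "(\<Sum>a\<in>A. card {b\<in>B. P a b}) = (\<Sum>a\<in>A. \<Sum>b\<in>B. if P a b then 1 else 0)"
    using assms(2) by (simp add: sum.If_cases Int_def)
  also have "\<dots> = (\<Sum>b\<in>B. \<Sum>a\<in>A. if P a b then 1 else 0)"
    by (rule sum.swap)
  also have "\<dots> = (\<Sum>b\<in>B. card {a\<in>A. P a b})"
    using assms(1) by (simp add: sum.If_cases Int_def)
  finally show ?thesis .
qed

lemma card_subsets_odd_add_even:
  assumes "finite X"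
  shows "card {Y. Y \<subseteq> X \<and> odd (card {u\<in>Y. R u})} + card {Y. Y \<subseteq> X \<and> even (card {u\<in>Y. R u})}
    = 2 ^ card X"
proof -
  have "{Y. Y \<subseteq> X \<and> odd (card {u\<in>Y. R u})} \<union> {Y. Y \<subseteq> X \<and> even (card {u\<in>Y. R u})} = Pow X"
    by auto
  then show ?thesis
    using assms by (subst card_Un_disjoint[symmetric]) (auto simp: card_Pow)
qed

lemma card_subsets_odd:
  assumes "finite X" "a \<in> X" "R a"
  shows "2 * card {Y. Y \<subseteq> X \<and> odd (card {u\<in>Y. R u})} = 2 ^ card X"
proof -
  define toggle where "toggle Y = (if a \<in> Y then Y - {a} else insert a Y)" for Y
  define Odd where "Odd = {Y. Y \<subseteq> X \<and> odd (card {u\<in>Y. R u})}"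
  define Even where "Even = {Y. Y \<subseteq> X \<and> even (card {u\<in>Y. R u})}"
  have toggle_parity: "even (card {u\<in>toggle Y. R u}) \<longleftrightarrow> odd (card {u\<in>Y. R u})"
    if "Y \<subseteq> X" for Y
  proof (cases "a \<in> Y")
    case True
    have "finite {u\<in>Y. R u}" "a \<in> {u\<in>Y. R u}"
      using finite_subset[OF that assms(1)] True assms(3) by simp_all
    then have "Suc (card ({u\<in>Y. R u} - {a})) = card {u\<in>Y. R u}"
      by (rule card_Suc_Diff1)
    moreover have "{u\<in>toggle Y. R u} = {u\<in>Y. R u} - {a}"
      using True by (auto simp: toggle_def)
    ultimately show ?thesis
      by (metis even_Suc)
  next
    case False
    have "finite {u\<in>Y. R u}" "a \<notin> {u\<in>Y. R u}"
      using finite_subset[OF that assms(1)] False by simp_all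
    moreover have "{u\<in>toggle Y. R u} = insert a {u\<in>Y. R u}"
      using False assms(3) by (auto simp: toggle_def)
    ultimately show ?thesis
      by simp
  qed
  have "toggle Y \<subseteq> X" "toggle (toggle Y) = Y" if "Y \<subseteq> X" for Y
    using that assms(2) by (auto simp: toggle_def)
  then have "bij_betw toggle Odd Even"
    by (intro bij_betw_byWitness[where f' = toggle]) (auto simp: Odd_def Even_def toggle_parity)
  then have "card Odd = card Even"
    by (rule bij_betw_same_card)
  then show ?thesis
    using card_subsets_odd_add_even[OF assms(1), of R] by (simp add: Odd_def Even_def)
qed

lemma card_subsets_even_ge:
  assumes "finite X"
  shows "2 ^ card X \<le> 2 * card {Y. Y \<subseteq> X \<and> even (card {u\<in>Y. R u})}"
proof (cases "\<exists>a\<in>X. R a")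
  case True
  then obtain a where "a \<in> X" "R a"
    by blast
  then show ?thesis
    using card_subsets_odd[OF assms] card_subsets_odd_add_even[OF assms, of R] by fastforce
next
  case False
  then have "{u\<in>Y. R u} = {}" if "Y \<subseteq> X" for Y
    using that by blast
  then have "{Y. Y \<subseteq> X \<and> even (card {u\<in>Y. R u})} = Pow X"
    by (simp add: Pow_def cong: conj_cong)
  then show ?thesis
    using assms by (simp add: card_Pow)
qed

lemma card_subsets_containing_odd_ge:
  assumes "finite X" "a \<in> X" "R a"
  shows "2 ^ card X \<le> 4 * card {Y. Y \<subseteq> X \<and> a \<in> Y \<and> odd (card {u\<in>Y. R u})}"
proof -
  let ?Even = "{Y. Y \<subseteq> X - {a} \<and> even (card {u\<in>Y. R u})}"
  let ?Odd = "{Y. Y \<subseteq> X \<and> a \<in> Y \<and> odd (card {u\<in>Y. R u})}"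
  have "insert a ` ?Even \<subseteq> ?Odd"
  proof
    fix Y assume "Y \<in> insert a ` ?Even"
    then obtain Y' where Y': "Y' \<subseteq> X - {a}" "even (card {u\<in>Y'. R u})" "Y = insert a Y'"
      by blast
    have "finite {u\<in>Y'. R u}"
      using Y'(1) assms(1) by (auto intro: finite_subset)
    moreover have "{u\<in>Y. R u} = insert a {u\<in>Y'. R u}" "a \<notin> Y'"
      using Y' assms(3) by auto
    ultimately show "Y \<in> ?Odd"
      using Y' assms(2) by auto
  qed
  moreover have "inj_on (insert a) ?Even"
    by (auto simp: inj_on_def)
  moreover have "finite ?Odd"
    using assms(1) by (auto intro: finite_subset[of _ "Pow X"])
  ultimately have "card ?Even \<le> card ?Odd"
    by (simp add: card_inj_on_le)
  moreover have "2 ^ card (X - {a}) \<le> 2 * card ?Even"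
    using assms(1) by (rule card_subsets_even_ge[OF finite_Diff])
  moreover have "card X = Suc (card (X - {a}))"
    using assms(1,2) by (rule card_Suc_Diff1[symmetric])
  ultimately show ?thesis
    by simp
qed

text \<open>First-moment argument: if a uniformly random subset Y of X makes each a \<in> A satisfy
  Q a Y with probability at least 1/k, then some Y satisfies at least card A / k of them.\<close>
lemma card_le_by_averaging:
  assumes "finite X" "finite A"
    and bound: "\<And>Y. Y \<subseteq> X \<Longrightarrow> card {a\<in>A. Q a Y} \<le> B"
    and frequent: "\<And>a. a \<in> A \<Longrightarrow> 2 ^ card X \<le> k * card {Y. Y \<subseteq> X \<and> Q a Y}"
  shows "card A \<le> k * B"
proof -
  have "2 ^ card X * card A = (\<Sum>a\<in>A. 2 ^ card X)"
    by simp
  also have "\<dots> \<le> (\<Sum>a\<in>A. k * card {Y\<in>Pow X. Q a Y})"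
    by (rule sum_mono) (simp add: frequent)
  also have "\<dots> = k * (\<Sum>Y\<in>Pow X. card {a\<in>A. Q a Y})"
    using sum_card_Collect_swap[of A "Pow X" Q] assms(1,2) by (simp flip: sum_distrib_left)
  also have "\<dots> \<le> k * (\<Sum>Y\<in>Pow X. B)"
    by (intro mult_le_mono2 sum_mono) (simp add: bound)
  also have "\<dots> = 2 ^ card X * (k * B)"
    using assms(1) by (simp add: card_Pow)
  finally show ?thesis
    by (simp only: mult_le_cancel1) simp
qed

definition all_even_induced :: "('a \<Rightarrow> 'a \<Rightarrow> bool) \<Rightarrow> 'a set \<Rightarrow> bool" where
  "all_even_induced E S \<longleftrightarrow> (\<forall>v\<in>S. even (induced_degree E S v))"

definition local_complement :: "'a set \<Rightarrow> ('a \<Rightarrow> 'a \<Rightarrow> bool) \<Rightarrow> 'a \<Rightarrow> 'a \<Rightarrow> bool" where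
  "local_complement N E x y \<longleftrightarrow> E x y \<noteq> (x \<in> N \<and> y \<in> N \<and> x \<noteq> y)"

lemma odd_induced_degree_local_complement:
  assumes "finite P" "x \<in> P"
  shows "odd (induced_degree (local_complement N E) P x) \<longleftrightarrow>
    odd (induced_degree E P x) \<noteq> (x \<in> N \<and> even (card (N \<inter> P)))"
proof -
  have "odd (card {u\<in>P. x \<in> N \<and> u \<in> N \<and> x \<noteq> u}) \<longleftrightarrow> x \<in> N \<and> even (card (N \<inter> P))"
  proof (cases "x \<in> N")
    case True
    then have "{u\<in>P. x \<in> N \<and> u \<in> N \<and> x \<noteq> u} = N \<inter> P - {x}"
      by auto
    moreover have "card (N \<inter> P) = Suc (card (N \<inter> P - {x}))"
      using True assms by (intro card_Suc_Diff1[symmetric]) auto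
    ultimately show ?thesis
      using True by simp
  qed simp
  then show ?thesis
    using odd_card_Collect_neq_iff[OF assms(1), of "E x" "\<lambda>u. x \<in> N \<and> u \<in> N \<and> x \<noteq> u"]
    by (simp add: induced_degree_def local_complement_def)
qed

lemma all_even_induced_of_local_complement:
  assumes "finite P" "all_even_induced (local_complement N E) P" "odd (card (N \<inter> P))"
  shows "all_even_induced E P"
  using assms odd_induced_degree_local_complement[OF assms(1)]
  by (auto simp: all_even_induced_def)

lemma all_even_induced_insert_of_local_complement:
  assumes "symp E" "irreflp E" "finite P" "v \<notin> P"
    and "all_even_induced (local_complement {u. E v u} E) P" "even (card ({u. E v u} \<inter> P))"
  shows "all_even_induced E (insert v P)"
proof -
  have "{u\<in>insert v P. E v u} = {u. E v u} \<inter> P"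
    using \<open>irreflp E\<close> by (auto simp: irreflp_def)
  then have "even (induced_degree E (insert v P) v)"
    using assms(6) by (simp add: induced_degree_def)
  moreover have "even (induced_degree E (insert v P) x)" if "x \<in> P" for x
  proof (cases "E v x")
    case True
    then have "{u\<in>insert v P. E x u} = insert v {u\<in>P. E x u}"
      using \<open>symp E\<close> by (auto dest: sympD)
    then have "induced_degree E (insert v P) x = Suc (induced_degree E P x)"
      using assms(3,4) by (simp add: induced_degree_def)
    then show ?thesis
      using assms(5,6) True that odd_induced_degree_local_complement[OF assms(3) that, of "{u. E v u}" E]
      by (simp add: all_even_induced_def)
  next
    case False
    then have "{u\<in>insert v P. E x u} = {u\<in>P. E x u}"
      using \<open>symp E\<close> by (auto dest: sympD)
    then show ?thesis
      using assms(5) False that odd_induced_degree_local_complement[OF assms(3) that, of "{u. E v u}" E]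
      by (simp add: all_even_induced_def induced_degree_def)
  qed
  ultimately show ?thesis
    by (auto simp: all_even_induced_def)
qed

text \<open>Gallai's theorem, by induction on the number of vertices: for a vertex v of odd degree,
  apply the induction hypothesis to the local complement at the neighbourhood N of v without v.
  As card N is odd, exactly one of the two parts meets N evenly, and v joins that part.\<close>
theorem gallai_even_partition:
  assumes "finite V" "symp E" "irreflp E"
  shows "\<exists>A\<subseteq>V. all_even_induced E A \<and> all_even_induced E (V - A)"
  using assms
proof (induction V arbitrary: E rule: finite_psubset_induct)
  case (psubset V)
  show ?case
  proof (cases "all_even_induced E V")
    case True
    then show ?thesis
      by (intro exI[of _ V]) (auto simp: all_even_induced_def)
  next
    case False
    then obtain v where v: "v \<in> V" "odd (induced_degree E V v)"
      by (auto simp: all_even_induced_def)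
    define N where "N = {u. E v u}"
    have "symp (local_complement N E)" "irreflp (local_complement N E)"
      using psubset.prems by (auto simp: local_complement_def symp_def irreflp_def)
    then obtain A where A: "A \<subseteq> V - {v}" "all_even_induced (local_complement N E) A"
        "all_even_induced (local_complement N E) (V - {v} - A)"
      using psubset.IH[of "V - {v}"] psubset.hyps v(1) by blast
    have "finite A" "finite (V - {v} - A)"
      using A(1) psubset.hyps by (auto intro: finite_subset)
    have "N \<inter> A \<union> N \<inter> (V - {v} - A) = {u\<in>V. E v u}"
      using A(1) \<open>irreflp E\<close> by (auto simp: N_def irreflp_def)
    then have "card (N \<inter> A) + card (N \<inter> (V - {v} - A)) = induced_degree E V v"
      using \<open>finite A\<close> \<open>finite (V - {v} - A)\<close>
      by (subst card_Un_disjoint[symmetric]) (auto simp: induced_degree_def)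
    then consider "odd (card (N \<inter> A))" "even (card (N \<inter> (V - {v} - A)))"
      | "even (card (N \<inter> A))" "odd (card (N \<inter> (V - {v} - A)))"
      using v(2) by (metis odd_add)
    then show ?thesis
    proof cases
      case 1
      have "all_even_induced E A" "all_even_induced E (insert v (V - {v} - A))"
        using 1 A \<open>finite A\<close> \<open>finite (V - {v} - A)\<close> psubset.prems
        by (auto intro: all_even_induced_of_local_complement all_even_induced_insert_of_local_complement
            simp: N_def)
      moreover have "insert v (V - {v} - A) = V - A"
        using A(1) v(1) by auto
      ultimately show ?thesis
        using A(1) by auto
    next
      case 2
      have "all_even_induced E (insert v A)" "all_even_induced E (V - {v} - A)"
        using 2 A \<open>finite A\<close> \<open>finite (V - {v} - A)\<close> psubset.prems
        by (auto intro: all_even_induced_of_local_complement all_even_induced_insert_of_local_complement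
            simp: N_def)
      moreover have "V - {v} - A = V - insert v A"
        by auto
      ultimately show ?thesis
        using A(1) v(1) by (intro exI[of _ "insert v A"]) auto
    qed
  qed
qed

definition independent :: "('a \<Rightarrow> 'a \<Rightarrow> bool) \<Rightarrow> 'a set \<Rightarrow> bool" where
  "independent E C \<longleftrightarrow> (\<forall>a\<in>C. \<forall>b\<in>C. \<not> E a b)"

definition codegree_twist :: "('a \<Rightarrow> 'a \<Rightarrow> bool) \<Rightarrow> 'a set \<Rightarrow> 'a \<Rightarrow> 'a \<Rightarrow> bool" where
  "codegree_twist E C y z \<longleftrightarrow> y \<noteq> z \<and> (E y z \<noteq> odd (card {c\<in>C. E y c \<and> E z c}))"

lemma simple_graphD:
  assumes "simple_graph V E"
  shows "finite V" "E u v \<Longrightarrow> v \<in> V" "symp E" "irreflp E"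
  using assms by (auto simp: simple_graph_def symp_def irreflp_def)

lemma induced_degree_Un_disjoint:
  assumes "finite A" "finite B" "A \<inter> B = {}"
  shows "induced_degree E (A \<union> B) v = induced_degree E A v + induced_degree E B v"
proof -
  have "{u\<in>A \<union> B. E v u} = {u\<in>A. E v u} \<union> {u\<in>B. E v u}"
    by auto
  then show ?thesis
    using assms by (auto simp: induced_degree_def intro: card_Un_disjoint)
qed

lemma card_le_f_o:
  assumes "simple_graph V E" "all_odd_induced V E T"
  shows "card T \<le> f_o V E"
proof -
  have "finite {S. all_odd_induced V E S}"
    using simple_graphD(1)[OF assms(1)] by (auto simp: all_odd_induced_def intro: finite_subset[of _ "Pow V"])
  then show ?thesis
    using assms(2) by (auto simp: f_o_def)
qed

lemma odd_card_odd_degree_neighbours_iff: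
  assumes "symp E" "finite C" "finite S"
  shows "odd (card {c\<in>C. E y c \<and> odd (induced_degree E S c)}) \<longleftrightarrow>
    odd (\<Sum>z\<in>S. card {c\<in>C. E y c \<and> E z c})"
proof -
  have "odd (card {c\<in>C. E y c \<and> odd (induced_degree E S c)}) \<longleftrightarrow>
      odd (\<Sum>c\<in>{c\<in>C. E y c}. induced_degree E S c)"
    using even_sum_iff[of "{c\<in>C. E y c}" "induced_degree E S"] \<open>finite C\<close> by simp
  also have "(\<Sum>c\<in>{c\<in>C. E y c}. induced_degree E S c) = (\<Sum>z\<in>S. card {c\<in>{c\<in>C. E y c}. E c z})"
    unfolding induced_degree_def using \<open>finite C\<close> \<open>finite S\<close> by (intro sum_card_Collect_swap) auto
  also have "\<dots> = (\<Sum>z\<in>S. card {c\<in>C. E y c \<and> E z c})"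
  proof -
    have "{c\<in>{c\<in>C. E y c}. E c z} = {c\<in>C. E y c \<and> E z c}" for z
      using \<open>symp E\<close> by (auto dest: sympD)
    then show ?thesis
      by simp
  qed
  finally show ?thesis .
qed

text \<open>A vertex y \<in> S has as many neighbours among the added vertices of C as the sum of its
  codegrees with the vertices of S, modulo 2. Its codegree with itself is its odd degree into C,
  and by the twist the other codegrees sum to its degree in S, modulo 2; so its degree in the
  union is odd.\<close>
lemma all_odd_induced_Un_odd_neighbours:
  assumes "simple_graph V E" "C \<subseteq> V" "independent E C" "S \<subseteq> V - C"
    and odd_C: "\<forall>y\<in>S. odd (induced_degree E C y)"
    and even_twist: "all_even_induced (codegree_twist E C) S"
  shows "all_odd_induced V E (S \<union> {c\<in>C. odd (induced_degree E S c)})"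
proof -
  define CS where "CS = {c\<in>C. odd (induced_degree E S c)}"
  have "finite S" "finite C" "finite CS"
    using assms(2,4) simple_graphD(1)[OF assms(1)] by (auto simp: CS_def intro: finite_subset)
  have "odd (induced_degree E (S \<union> CS) c)" if "c \<in> CS" for c
  proof -
    have "{u\<in>S \<union> CS. E c u} = {u\<in>S. E c u}"
      using that \<open>independent E C\<close> by (auto simp: CS_def independent_def)
    then show ?thesis
      using that by (simp add: CS_def induced_degree_def)
  qed
  moreover have "odd (induced_degree E (S \<union> CS) y)" if "y \<in> S" for y
  proof -
    define codeg where "codeg z = card {c\<in>C. E y c \<and> E z c}" for z
    have "{u\<in>CS. E y u} = {c\<in>C. E y c \<and> odd (induced_degree E S c)}"
      by (auto simp: CS_def)
    then have "odd (induced_degree E CS y) \<longleftrightarrow> odd (\<Sum>z\<in>S. codeg z)"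
      using odd_card_odd_degree_neighbours_iff[OF simple_graphD(3)[OF assms(1)] \<open>finite C\<close> \<open>finite S\<close>]
      by (simp add: induced_degree_def codeg_def)
    also have "(\<Sum>z\<in>S. codeg z) = codeg y + (\<Sum>z\<in>S - {y}. codeg z)"
      using \<open>finite S\<close> that by (rule sum.remove)
    finally have deg_CS: "odd (induced_degree E CS y) \<longleftrightarrow> odd (codeg y + (\<Sum>z\<in>S - {y}. codeg z))" .
    have "{z\<in>S - {y}. E y z \<noteq> odd (codeg z)} = {z\<in>S. codegree_twist E C y z}"
      by (auto simp: codegree_twist_def codeg_def)
    then have "even (card {z\<in>S - {y}. E y z \<noteq> odd (codeg z)})"
      using even_twist that by (simp add: all_even_induced_def induced_degree_def)
    then have "odd (card {z\<in>S - {y}. odd (codeg z)}) \<longleftrightarrow> odd (card {z\<in>S - {y}. E y z})"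
      using odd_card_Collect_neq_iff[of "S - {y}" "E y" "\<lambda>z. odd (codeg z)"] \<open>finite S\<close> by auto
    moreover have "{z\<in>S - {y}. E y z} = {z\<in>S. E y z}"
      using simple_graphD(4)[OF assms(1)] by (auto simp: irreflp_def)
    moreover have "odd (codeg y)"
      using odd_C that by (simp add: codeg_def induced_degree_def)
    moreover have "odd (\<Sum>z\<in>S - {y}. codeg z) \<longleftrightarrow> odd (card {z\<in>S - {y}. odd (codeg z)})"
      using \<open>finite S\<close> by (simp add: even_sum_iff)
    moreover have "induced_degree E (S \<union> CS) y = induced_degree E S y + induced_degree E CS y"
      using \<open>finite S\<close> \<open>finite CS\<close> assms(4) by (intro induced_degree_Un_disjoint) (auto simp: CS_def)
    ultimately show ?thesis
      using deg_CS by (simp add: induced_degree_def)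
  qed
  ultimately show ?thesis
    using assms(2,4) by (auto simp: all_odd_induced_def CS_def)
qed

lemma card_add_card_odd_neighbours_le:
  assumes "simple_graph V E" "C \<subseteq> V" "independent E C" "U \<subseteq> V - C"
    and odd_C: "\<forall>y\<in>U. odd (induced_degree E C y)"
  shows "card U + card {c\<in>C. odd (induced_degree E U c)} \<le> 2 * f_o V E"
proof -
  have "finite U" "finite C"
    using assms(2,4) simple_graphD(1)[OF assms(1)] by (auto intro: finite_subset)
  have part_le: "card S + card {c\<in>C. odd (induced_degree E S c)} \<le> f_o V E"
    if "S \<subseteq> U" "all_even_induced (codegree_twist E C) S" for S
  proof -
    have "all_odd_induced V E (S \<union> {c\<in>C. odd (induced_degree E S c)})"
      using assms that by (intro all_odd_induced_Un_odd_neighbours) auto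
    moreover have "card (S \<union> {c\<in>C. odd (induced_degree E S c)}) =
        card S + card {c\<in>C. odd (induced_degree E S c)}"
      using that(1) assms(4) \<open>finite U\<close> \<open>finite C\<close> by (intro card_Un_disjoint) (auto intro: finite_subset)
    ultimately show ?thesis
      using card_le_f_o[OF assms(1)] by metis
  qed
  have "{c\<in>C. E y c \<and> E z c} = {c\<in>C. E z c \<and> E y c}" for y z
    by blast
  then have "symp (codegree_twist E C)" "irreflp (codegree_twist E C)"
    using simple_graphD(3)[OF assms(1)]
    by (auto simp: codegree_twist_def symp_def irreflp_def dest: sympD)
  then obtain S where S: "S \<subseteq> U" "all_even_induced (codegree_twist E C) S"
      "all_even_induced (codegree_twist E C) (U - S)"
    using gallai_even_partition[OF \<open>finite U\<close>] by blast
  have "finite S" "finite (U - S)"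
    using S(1) \<open>finite U\<close> by (auto intro: finite_subset)
  have "U = S \<union> (U - S)"
    using S(1) by blast
  then have card_U: "card U = card S + card (U - S)"
    and degree_U: "\<And>c. induced_degree E U c = induced_degree E S c + induced_degree E (U - S) c"
    using card_Un_disjoint[OF \<open>finite S\<close> \<open>finite (U - S)\<close>]
      induced_degree_Un_disjoint[OF \<open>finite S\<close> \<open>finite (U - S)\<close>] by auto
  have "{c\<in>C. odd (induced_degree E U c)} \<subseteq>
      {c\<in>C. odd (induced_degree E S c)} \<union> {c\<in>C. odd (induced_degree E (U - S) c)}"
    by (auto simp: degree_U)
  then have "card {c\<in>C. odd (induced_degree E U c)} \<le>
      card ({c\<in>C. odd (induced_degree E S c)} \<union> {c\<in>C. odd (induced_degree E (U - S) c)})"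
    using \<open>finite C\<close> by (intro card_mono) auto
  also have "\<dots> \<le>
      card {c\<in>C. odd (induced_degree E S c)} + card {c\<in>C. odd (induced_degree E (U - S) c)}"
    by (rule card_Un_le)
  finally show ?thesis
    using card_U part_le[OF S(1,2)] part_le[OF Diff_subset S(3)] by linarith
qed

lemma card_odd_degree_Un_neighbours_le:
  assumes "simple_graph V E" "C \<subseteq> V" "independent E C"
  defines "U \<equiv> {v\<in>V - C. odd (induced_degree E C v)}"
  shows "card (U \<union> {c\<in>C. \<exists>u\<in>U. E c u}) \<le> 4 * f_o V E"
proof -
  define A where "A = U \<union> {c\<in>C. \<exists>u\<in>U. E c u}"
  define Q where "Q a Y \<longleftrightarrow> (if a \<in> C then odd (induced_degree E Y a) else a \<in> Y)" for a Y
  have "finite U" "finite C"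
    using simple_graphD(1)[OF assms(1)] assms(2) by (auto simp: U_def intro: finite_subset)
  then have "finite A"
    by (simp add: A_def)
  have "card {a\<in>A. Q a Y} \<le> 2 * f_o V E" if "Y \<subseteq> U" for Y
  proof -
    have "finite Y"
      using that \<open>finite U\<close> by (rule finite_subset)
    have "{a\<in>A. Q a Y} \<subseteq> Y \<union> {c\<in>C. odd (induced_degree E Y c)}"
      using that by (auto simp: A_def Q_def U_def)
    then have "card {a\<in>A. Q a Y} \<le> card (Y \<union> {c\<in>C. odd (induced_degree E Y c)})"
      using \<open>finite Y\<close> \<open>finite C\<close> by (intro card_mono) auto
    also have "\<dots> \<le> card Y + card {c\<in>C. odd (induced_degree E Y c)}"
      by (rule card_Un_le)
    also have "\<dots> \<le> 2 * f_o V E"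
      using assms(1-3) that by (intro card_add_card_odd_neighbours_le) (auto simp: U_def)
    finally show ?thesis .
  qed
  moreover have "2 ^ card U \<le> 2 * card {Y. Y \<subseteq> U \<and> Q a Y}" if "a \<in> A" for a
  proof (cases "a \<in> C")
    case True
    then have "a \<notin> U"
      by (simp add: U_def)
    then obtain u where "u \<in> U" "E a u"
      using \<open>a \<in> A\<close> by (auto simp: A_def)
    then show ?thesis
      using card_subsets_odd[OF \<open>finite U\<close>, of u "E a"] True by (simp add: Q_def induced_degree_def)
  next
    case False
    then have "a \<in> U"
      using \<open>a \<in> A\<close> by (simp add: A_def)
    have "{u\<in>Y. u = a} = (if a \<in> Y then {a} else {})" for Y
      by auto
    then have "odd (card {u\<in>Y. u = a}) \<longleftrightarrow> a \<in> Y" for Y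
      by simp
    then show ?thesis
      using card_subsets_odd[OF \<open>finite U\<close> \<open>a \<in> U\<close>, of "\<lambda>u. u = a"] False by (simp add: Q_def)
  qed
  ultimately show ?thesis
    using card_le_by_averaging[OF \<open>finite U\<close> \<open>finite A\<close>, of Q "2 * f_o V E" 2] by (simp add: A_def)
qed

lemma ex_maximal_independent:
  assumes "finite V" "symp E" "irreflp E"
  shows "\<exists>I\<subseteq>V. independent E I \<and> (\<forall>v\<in>V - I. \<exists>c\<in>I. E v c)"
proof -
  define F where "F = {I. I \<subseteq> V \<and> independent E I}"
  have "finite F" "{} \<in> F"
    using assms(1) by (auto simp: F_def independent_def)
  then obtain I where "I \<in> F" and maximal: "\<And>J. J \<in> F \<Longrightarrow> I \<subseteq> J \<Longrightarrow> I = J"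
    using finite_has_maximal[of F] by blast
  then have I: "I \<subseteq> V" "independent E I"
    by (simp_all add: F_def)
  have "\<exists>c\<in>I. E v c" if "v \<in> V - I" for v
  proof (rule ccontr)
    assume no_edge: "\<not> (\<exists>c\<in>I. E v c)"
    then have "\<not> E c v" if "c \<in> I" for c
      using that \<open>symp E\<close> by (meson sympD)
    then have "independent E (insert v I)"
      using no_edge I(2) \<open>irreflp E\<close> by (simp add: independent_def irreflp_def)
    then have "insert v I \<in> F"
      using I(1) that by (simp add: F_def)
    then show False
      using maximal[of "insert v I"] that by auto
  qed
  then show ?thesis
    using I by blast
qed

lemma card_odd_degree_into_subset_le:
  assumes "simple_graph V E" "I \<subseteq> V" "independent E I" "C \<subseteq> I"
    and nb: "\<And>c. c \<in> V \<Longrightarrow> E c (nb c)"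
  shows "card {a\<in>V. if a \<in> I then a \<in> C \<and> odd (induced_degree E C (nb a))
    else odd (induced_degree E C a)} \<le> 4 * f_o V E"
    (is "card ?A \<le> _")
proof -
  let ?U = "{v\<in>V - C. odd (induced_degree E C v)}"
  have "C \<subseteq> V" "independent E C"
    using assms(2-4) by (auto simp: independent_def)
  have "finite C"
    using \<open>C \<subseteq> V\<close> simple_graphD(1)[OF assms(1)] by (rule finite_subset)
  have "?A \<subseteq> ?U \<union> {c\<in>C. \<exists>u\<in>?U. E c u}"
  proof
    fix a assume a: "a \<in> ?A"
    show "a \<in> ?U \<union> {c\<in>C. \<exists>u\<in>?U. E c u}"
    proof (cases "a \<in> I")
      case True
      have "E a (nb a)"
        using a nb by blast
      moreover have "nb a \<in> V" "nb a \<notin> C"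
        using simple_graphD(2)[OF assms(1) \<open>E a (nb a)\<close>] True assms(3,4) \<open>E a (nb a)\<close>
        by (auto simp: independent_def)
      ultimately show ?thesis
        using True a by auto
    next
      case False
      then show ?thesis
        using a assms(4) by auto
    qed
  qed
  then have "card ?A \<le> card (?U \<union> {c\<in>C. \<exists>u\<in>?U. E c u})"
    using simple_graphD(1)[OF assms(1)] \<open>finite C\<close> by (intro card_mono) auto
  also have "\<dots> \<le> 4 * f_o V E"
    using assms(1) \<open>C \<subseteq> V\<close> \<open>independent E C\<close> by (rule card_odd_degree_Un_neighbours_le)
  finally show ?thesis .
qed

text \<open>Average over a random subset C of a maximal independent set I: a vertex outside I has
  odd degree into C with probability 1/2, and a vertex c \<in> I lies in C while its chosen
  neighbour has odd degree into C with probability at least 1/4.\<close>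
theorem card_le_16_f_o:
  assumes "simple_graph V E" "\<forall>v\<in>V. degree V E v \<ge> 1"
  shows "card V \<le> 16 * f_o V E"
proof -
  note G = simple_graphD[OF assms(1)]
  obtain I where I: "I \<subseteq> V" "independent E I" "\<forall>v\<in>V - I. \<exists>c\<in>I. E v c"
    using ex_maximal_independent[OF G(1,3,4)] by blast
  have "finite I"
    using I(1) G(1) by (rule finite_subset)
  have "\<exists>u. E c u" if "c \<in> V" for c
  proof -
    have "1 \<le> card {u\<in>V. E c u}"
      using assms(2) that by (simp add: degree_def induced_degree_def)
    then have "{u\<in>V. E c u} \<noteq> {}"
      by (metis card.empty not_one_le_zero)
    then show ?thesis
      by blast
  qed
  then obtain nb where nb: "\<And>c. c \<in> V \<Longrightarrow> E c (nb c)"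
    by metis
  define Q where "Q a C \<longleftrightarrow>
    (if a \<in> I then a \<in> C \<and> odd (induced_degree E C (nb a)) else odd (induced_degree E C a))" for a C
  have "card {a\<in>V. Q a C} \<le> 4 * f_o V E" if "C \<subseteq> I" for C
    using assms(1) I(1,2) that nb by (simp add: Q_def card_odd_degree_into_subset_le)
  moreover have "2 ^ card I \<le> 4 * card {C. C \<subseteq> I \<and> Q a C}" if "a \<in> V" for a
  proof (cases "a \<in> I")
    case True
    have "E (nb a) a"
      using G(3) nb[OF that] by (rule sympD)
    then show ?thesis
      using card_subsets_containing_odd_ge[OF \<open>finite I\<close> True, of "E (nb a)"] True
      by (simp add: Q_def induced_degree_def)
  next
    case False
    with I(3) that obtain c where "c \<in> I" "E a c"
      by blast
    then show ?thesis
      using card_subsets_odd[OF \<open>finite I\<close>, of c "E a"] False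
      by (simp add: Q_def induced_degree_def)
  qed
  ultimately show ?thesis
    using card_le_by_averaging[OF \<open>finite I\<close> G(1), of Q "4 * f_o V E" 4] by simp
qed

theorem theorem1p3:
  fixes V :: "'a set" and E :: "'a \<Rightarrow> 'a \<Rightarrow> bool"
  assumes "simple_graph V E"
    and "\<forall>v\<in>V. degree V E v \<ge> 1"
  shows "10000 * f_o V E \<ge> card V"
  using card_le_16_f_o[OF assms] by linarith

end
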